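(* Let $n \ge 3$ and let $x_1, \dots, x_n \in \mathbb{R}$ be pairwise distinct. Then the maximum likelihood estimate $\hat\theta \in \mathbb{H}$ of the sample from the Cauchy distribution satisfies $$\sum_{j=1}^n \frac{x_j - \hat\theta}{x_j - \overline{\hat\theta}} = 0.$$
   Context: $\mathbb{H} = \{\theta\in\mathbb{C}:\Im\theta>0\}$. The Cauchy distribution with parameter $\theta = \mu + i\sigma\in\mathbb{H}$ has density $f(x;\theta) = \frac{\sigma}{\pi}\frac{1}{(x-\mu)^2+\sigma^2}$; the maximum likelihood estimate is the (unique) maximizer over $\mathbb{H}$ of $\prod_{j=1}^n f(x_j;\theta)$. *)

theory Defs
  imports "HOL-Analysis.Analysis"
begin

definition cauchy_density :: "real \<Rightarrow> complex \<Rightarrow> real" where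
  "cauchy_density x \<theta> = (Im \<theta> / pi) * (1 / ((x - Re \<theta>)^2 + (Im \<theta>)^2))"

definition cauchy_likelihood :: "nat \<Rightarrow> (nat \<Rightarrow> real) \<Rightarrow> complex \<Rightarrow> real" where
  "cauchy_likelihood n x \<theta> = (\<Prod>j=1..n. cauchy_density (x j) \<theta>)"

definition is_cauchy_MLE :: "nat \<Rightarrow> (nat \<Rightarrow> real) \<Rightarrow> complex \<Rightarrow> bool" where
  "is_cauchy_MLE n x \<theta> \<longleftrightarrow> Im \<theta> > 0 \<and>
     (\<forall>\<theta>'. Im \<theta>' > 0 \<longrightarrow> cauchy_likelihood n x \<theta>' \<le> cauchy_likelihood n x \<theta>)"

end

theory Submission
  imports Defs
begin

(* The MLE is an interior maximum of the log-likelihood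
   l(mu, sigma) = sum_j (ln sigma - ln pi - ln ((x_j - mu)^2 + sigma^2))
   on the open half plane, so both partial derivatives of l vanish there.
   With w_j = x_j - conj theta, the j-th summand is conj w_j / w_j, whose real part
   ((x_j - mu)^2 - sigma^2) / |w_j|^2 and imaginary part -2 sigma (x_j - mu) / |w_j|^2
   sum to sigma * dl/dsigma and -sigma * dl/dmu respectively.
   The hypotheses n >= 3 and distinctness only guarantee that the MLE exists and is
   unique; the identity holds at any maximizer. *)

definition cauchy_log_likelihood :: "nat \<Rightarrow> (nat \<Rightarrow> real) \<Rightarrow> real \<Rightarrow> real \<Rightarrow> real" where
  "cauchy_log_likelihood n x \<mu> \<sigma> = (\<Sum>j=1..n. ln \<sigma> - ln pi - ln ((x j - \<mu>)^2 + \<sigma>^2))"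

lemma cauchy_density_pos: "Im \<theta> > 0 \<Longrightarrow> cauchy_density x \<theta> > 0"
  by (simp add: cauchy_density_def add_nonneg_pos)

lemma cauchy_likelihood_pos: "Im \<theta> > 0 \<Longrightarrow> cauchy_likelihood n x \<theta> > 0"
  unfolding cauchy_likelihood_def by (intro prod_pos) (simp add: cauchy_density_pos)

lemma ln_cauchy_density:
  assumes "Im \<theta> > 0"
  shows "ln (cauchy_density x \<theta>) = ln (Im \<theta>) - ln pi - ln ((x - Re \<theta>)^2 + (Im \<theta>)^2)"
  using assms by (simp add: cauchy_density_def ln_mult ln_div add_nonneg_pos)

lemma ln_cauchy_likelihood:
  assumes "Im \<theta> > 0"
  shows "ln (cauchy_likelihood n x \<theta>) = cauchy_log_likelihood n x (Re \<theta>) (Im \<theta>)"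
  using assms unfolding cauchy_likelihood_def cauchy_log_likelihood_def
  by (simp add: ln_prod cauchy_density_pos ln_cauchy_density less_imp_neq[symmetric])

lemma is_cauchy_MLE_imp_log_likelihood_le:
  assumes "is_cauchy_MLE n x \<theta>" and "\<sigma> > 0"
  shows "cauchy_log_likelihood n x \<mu> \<sigma> \<le> cauchy_log_likelihood n x (Re \<theta>) (Im \<theta>)"
proof -
  have "Im \<theta> > 0" and "cauchy_likelihood n x (Complex \<mu> \<sigma>) \<le> cauchy_likelihood n x \<theta>"
    using assms by (simp_all add: is_cauchy_MLE_def)
  then have "ln (cauchy_likelihood n x (Complex \<mu> \<sigma>)) \<le> ln (cauchy_likelihood n x \<theta>)"
    using assms(2) by (simp add: cauchy_likelihood_pos)
  then show ?thesis
    using assms(2) \<open>Im \<theta> > 0\<close> by (simp add: ln_cauchy_likelihood)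
qed

lemma cauchy_log_likelihood_location_derivative:
  assumes "\<sigma> > 0"
  shows "((\<lambda>a. cauchy_log_likelihood n x a \<sigma>) has_real_derivative
           2 * (\<Sum>j=1..n. (x j - \<mu>) / ((x j - \<mu>)^2 + \<sigma>^2))) (at \<mu>)"
  unfolding cauchy_log_likelihood_def sum_distrib_left
  using assms by (auto intro!: derivative_eq_intros sum.cong simp: add_pos_nonneg field_simps)

lemma cauchy_log_likelihood_scale_derivative:
  assumes "\<sigma> > 0"
  shows "((\<lambda>b. cauchy_log_likelihood n x \<mu> b) has_real_derivative
           (\<Sum>j=1..n. ((x j - \<mu>)^2 - \<sigma>^2) / ((x j - \<mu>)^2 + \<sigma>^2)) / \<sigma>) (at \<sigma>)"
proof -
  have "((\<lambda>b. cauchy_log_likelihood n x \<mu> b) has_real_derivative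
           (\<Sum>j=1..n. 1 / \<sigma> - 2 * \<sigma> / ((x j - \<mu>)^2 + \<sigma>^2))) (at \<sigma>)"
    unfolding cauchy_log_likelihood_def
    using assms by (auto intro!: derivative_eq_intros sum.cong simp: add_pos_nonneg field_simps)
  moreover have "1 / \<sigma> - 2 * \<sigma> / ((c - \<mu>)^2 + \<sigma>^2)
      = ((c - \<mu>)^2 - \<sigma>^2) / ((c - \<mu>)^2 + \<sigma>^2) / \<sigma>" for c
  proof -
    have "(c - \<mu>)^2 + \<sigma>^2 > 0"
      using assms by (simp add: add_nonneg_pos)
    then show ?thesis
      using assms by (simp add: field_simps) (simp add: power2_eq_square)
  qed
  ultimately show ?thesis by (simp add: sum_divide_distrib)
qed

lemma is_cauchy_MLE_location_equation:
  assumes "is_cauchy_MLE n x \<theta>"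
  shows "(\<Sum>j=1..n. (x j - Re \<theta>) / ((x j - Re \<theta>)^2 + (Im \<theta>)^2)) = 0"
proof -
  have "Im \<theta> > 0"
    using assms by (simp add: is_cauchy_MLE_def)
  have "2 * (\<Sum>j=1..n. (x j - Re \<theta>) / ((x j - Re \<theta>)^2 + (Im \<theta>)^2)) = 0"
    by (rule DERIV_local_max[OF cauchy_log_likelihood_location_derivative[OF \<open>Im \<theta> > 0\<close>], of 1])
      (simp_all add: is_cauchy_MLE_imp_log_likelihood_le[OF assms \<open>Im \<theta> > 0\<close>])
  then show ?thesis by simp
qed

lemma is_cauchy_MLE_scale_equation:
  assumes "is_cauchy_MLE n x \<theta>"
  shows "(\<Sum>j=1..n. ((x j - Re \<theta>)^2 - (Im \<theta>)^2) / ((x j - Re \<theta>)^2 + (Im \<theta>)^2)) = 0"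
proof -
  have "Im \<theta> > 0"
    using assms by (simp add: is_cauchy_MLE_def)
  have "(\<Sum>j=1..n. ((x j - Re \<theta>)^2 - (Im \<theta>)^2) / ((x j - Re \<theta>)^2 + (Im \<theta>)^2)) / Im \<theta> = 0"
    by (rule DERIV_local_max[OF cauchy_log_likelihood_scale_derivative[OF \<open>Im \<theta> > 0\<close>], of "Im \<theta>"])
      (use \<open>Im \<theta> > 0\<close> is_cauchy_MLE_imp_log_likelihood_le[OF assms] in auto)
  then show ?thesis
    using \<open>Im \<theta> > 0\<close> by simp
qed

lemma cnj_divide_self:
  "cnj w / w = Complex (((Re w)^2 - (Im w)^2) / ((Re w)^2 + (Im w)^2))
                       (- 2 * Im w * (Re w / ((Re w)^2 + (Im w)^2)))"
  by (simp add: complex_eq_iff Re_divide Im_divide power2_eq_square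
      diff_divide_distrib[symmetric] add_divide_distrib[symmetric])

theorem mainTheorem7:
  fixes n :: nat and x :: "nat \<Rightarrow> real" and \<theta> :: complex
  assumes "n \<ge> 3"
    and "\<And>i j. i \<in> {1..n} \<Longrightarrow> j \<in> {1..n} \<Longrightarrow> i \<noteq> j \<Longrightarrow> x i \<noteq> x j"
    and "is_cauchy_MLE n x \<theta>"
  shows "(\<Sum>j=1..n. (complex_of_real (x j) - \<theta>) / (complex_of_real (x j) - cnj \<theta>)) = 0"
proof -
  define d where "d j = (x j - Re \<theta>)^2 + (Im \<theta>)^2" for j
  have "(complex_of_real (x j) - \<theta>) / (complex_of_real (x j) - cnj \<theta>)
      = Complex (((x j - Re \<theta>)^2 - (Im \<theta>)^2) / d j) (- 2 * Im \<theta> * ((x j - Re \<theta>) / d j))" for j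
    using cnj_divide_self[of "complex_of_real (x j) - cnj \<theta>"] by (simp add: d_def)
  then have "(\<Sum>j=1..n. (complex_of_real (x j) - \<theta>) / (complex_of_real (x j) - cnj \<theta>))
      = Complex (\<Sum>j=1..n. ((x j - Re \<theta>)^2 - (Im \<theta>)^2) / d j)
                (- 2 * Im \<theta> * (\<Sum>j=1..n. (x j - Re \<theta>) / d j))"
    by (simp add: complex_eq_iff Re_sum Im_sum sum_distrib_left)
  also have "\<dots> = 0"
    using is_cauchy_MLE_scale_equation[OF assms(3)] is_cauchy_MLE_location_equation[OF assms(3)]
    by (simp add: d_def complex_eq_iff)
  finally show ?thesis .
qed

end
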